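(* Let $b\ge 2$ and $m\ge 0$ be integers. Consider the following nondeterministic procedure. Set $\mathcal U_1=[0,1)^2$. For $n=1,2,\ldots$: if $\mathcal U_n=\emptyset$, stop; otherwise choose an arbitrary box $X_n=\prod_{j=1}^2\left[\frac{u_j(n)}{b^m},\frac{u_j(n)+1}{b^m}\right)\subseteq \mathcal U_n$ with $u_j(n)\in\{0,1,\ldots,b^m-1\}$, and set $\mathcal U_{n+1}=\mathcal U_n\setminus\bigcup_{E\in\mathcal E_m(X_n)}E$. Then, regardless of the choices made, the procedure stops after exactly $b^m$ boxes have been chosen.
   Context: An elementary $b$-adic interval in $[0,1)^s$ is a set $\prod_{j=1}^s\left[\frac{a_j}{b^{d_j}},\frac{a_j+1}{b^{d_j}}\right)$ with $d_j\in\mathbb N_0$ and $a_j\in\{0,1,\ldots,b^{d_j}-1\}$; its volume is $b^{-(d_1+\cdots+d_s)}$. For a box $X=\prod_{j=1}^s\left[\frac{u_j}{b^m},\frac{u_j+1}{b^m}\right)$, $\mathcal E_m(X)$ denotes the set of all elementary $b$-adic intervals of volume $b^{-m}$ that contain $X$ as a subset. *)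

theory Defs
  imports Complex_Main
begin

definition unit_sq :: "(real \<times> real) set" where
  "unit_sq = {p. 0 \<le> fst p \<and> fst p < 1 \<and> 0 \<le> snd p \<and> snd p < 1}"

definition elem_int :: "nat \<Rightarrow> nat \<times> nat \<Rightarrow> nat \<times> nat \<Rightarrow> (real \<times> real) set" where
  "elem_int b d a = {p.
      real (fst a) / real b ^ fst d \<le> fst p \<and> fst p < (real (fst a) + 1) / real b ^ fst d \<and>
      real (snd a) / real b ^ snd d \<le> snd p \<and> snd p < (real (snd a) + 1) / real b ^ snd d}"

definition is_elem_int :: "nat \<Rightarrow> (real \<times> real) set \<Rightarrow> bool" where
  "is_elem_int b E \<longleftrightarrow> (\<exists>d a. fst a < b ^ fst d \<and> snd a < b ^ snd d \<and> E = elem_int b d a)"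

definition elem_vol :: "nat \<Rightarrow> nat \<times> nat \<Rightarrow> real" where
  "elem_vol b d = 1 / real b ^ (fst d + snd d)"

definition Em :: "nat \<Rightarrow> nat \<Rightarrow> (real \<times> real) set \<Rightarrow> (real \<times> real) set set" where
  "Em b m X = {E. \<exists>d a. fst a < b ^ fst d \<and> snd a < b ^ snd d \<and> E = elem_int b d a
                       \<and> elem_vol b d = 1 / real b ^ m \<and> X \<subseteq> E}"

definition grid_boxes :: "nat \<Rightarrow> nat \<Rightarrow> (real \<times> real) set set" where
  "grid_boxes b m = {elem_int b (m, m) u | u. fst u < b ^ m \<and> snd u < b ^ m}"

definition U_step :: "nat \<Rightarrow> nat \<Rightarrow> (real \<times> real) set \<Rightarrow> (real \<times> real) set \<Rightarrow> (real \<times> real) set" where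
  "U_step b m U X = U - \<Union> (Em b m X)"

definition U_after :: "nat \<Rightarrow> nat \<Rightarrow> (real \<times> real) set list \<Rightarrow> (real \<times> real) set" where
  "U_after b m xs = foldl (U_step b m) unit_sq xs"

text \<open>A legal run of the procedure: each chosen box is a grid box contained in the current U
  (which is then necessarily nonempty, so the procedure had not stopped).\<close>
definition valid_run :: "nat \<Rightarrow> nat \<Rightarrow> (real \<times> real) set list \<Rightarrow> bool" where
  "valid_run b m xs \<longleftrightarrow>
     (\<forall>i < length xs. xs ! i \<in> grid_boxes b m \<and> U_after b m (take i xs) \<noteq> {}
                     \<and> xs ! i \<subseteq> U_after b m (take i xs))"

end

theory Submission
  imports Defs
begin

text \<open>Index the grid boxes by cells \<open>(x, y)\<close> with \<open>x, y < b^m\<close>. The elementary intervals of volume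
  \<open>b^-m\<close> containing the box of \<open>u\<close> are indexed by \<open>k \<le> m\<close>, and the box of \<open>v\<close> lies in the
  \<open>k\<close>-th one iff \<open>u\<close>, \<open>v\<close> agree after dropping the last \<open>k\<close> base-\<open>b\<close> digits of \<open>x\<close> and the last
  \<open>m - k\<close> digits of \<open>y\<close>. So a run is a sequence of pairwise non-clashing cells, and a point
  survives iff its cell clashes with no chosen cell. Cells in one row always clash, hence the
  chosen cells lie in distinct rows: at most \<open>b^m\<close> of them, and when all rows are used nothing
  survives. If some row is still unused, induction on \<open>m\<close> (splitting off the leading digit of
  \<open>x\<close> and the last digit of \<open>y\<close>) finds a cell in that row clashing with no chosen cell, so a
  further box can still be chosen.\<close>

text \<open>Some elementary interval of volume \<open>b^-m\<close> contains the boxes of both cells.\<close>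
definition clash :: "nat \<Rightarrow> nat \<Rightarrow> nat \<times> nat \<Rightarrow> nat \<times> nat \<Rightarrow> bool" where
  "clash b m u v \<longleftrightarrow>
     (\<exists>k\<le>m. fst u div b ^ k = fst v div b ^ k \<and> snd u div b ^ (m - k) = snd v div b ^ (m - k))"

lemma clash_refl: "clash b m u u"
  unfolding clash_def by auto

lemma clash_sym: "clash b m u v \<Longrightarrow> clash b m v u"
  unfolding clash_def by metis

lemma clash_same_row:
  assumes "fst u < b ^ m" "fst v < b ^ m" "snd u = snd v"
  shows "clash b m u v"
  unfolding clash_def using assms by (intro exI[of _ m]) auto

lemma inj_on_snd_if_pairwise_not_clash:
  assumes "S \<subseteq> {..<b ^ m} \<times> {..<b ^ m}" "pairwise (\<lambda>u v. \<not> clash b m u v) S"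
  shows "inj_on snd S"
proof (rule inj_onI)
  fix u v assume "u \<in> S" "v \<in> S" "snd u = snd v"
  moreover from \<open>u \<in> S\<close> \<open>v \<in> S\<close> assms(1) have "fst u < b ^ m" "fst v < b ^ m"
    by (auto simp: mem_Times_iff)
  ultimately have "clash b m u v"
    by (simp add: clash_same_row)
  with \<open>u \<in> S\<close> \<open>v \<in> S\<close> assms(2) show "u = v"
    unfolding pairwise_def by blast
qed

lemma div_pow_eq_iff:
  fixes x x' b :: nat
  assumes "b > 0" "k \<le> m"
  shows "x div b ^ k = x' div b ^ k \<longleftrightarrow>
           x div b ^ m = x' div b ^ m \<and> x mod b ^ m div b ^ k = x' mod b ^ m div b ^ k"
proof -
  define c where "c = b ^ (m - k)"
  have bm: "b ^ m = b ^ k * c"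
    using assms unfolding c_def by (simp flip: power_add)
  have digits: "z div b ^ m = z div b ^ k div c" "z mod b ^ m div b ^ k = z div b ^ k mod c" for z
    using assms by (simp_all add: bm div_mult2_eq mod_mult2_eq)
  have "x div b ^ k = x' div b ^ k \<longleftrightarrow>
          x div b ^ k div c = x' div b ^ k div c \<and> x div b ^ k mod c = x' div b ^ k mod c"
    by (metis div_mult_mod_eq)
  then show ?thesis
    by (simp only: digits)
qed

definition lower_cell :: "nat \<Rightarrow> nat \<Rightarrow> nat \<times> nat \<Rightarrow> nat \<times> nat" where
  "lower_cell b m u = (fst u mod b ^ m, snd u div b)"

lemma clash_Suc_iff:
  assumes "b > 0" "fst u < b ^ Suc m" "fst v < b ^ Suc m"
  shows "clash b (Suc m) u v \<longleftrightarrow> snd u = snd v \<or>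
           (fst u div b ^ m = fst v div b ^ m \<and> clash b m (lower_cell b m u) (lower_cell b m v))"
    (is "?lhs \<longleftrightarrow> _ \<or> (?top \<and> ?low)")
proof -
  have row: "snd w div b ^ (Suc m - k) = snd w div b div b ^ (m - k)" if "k \<le> m" for w :: "nat \<times> nat" and k
    using that by (simp add: Suc_diff_le div_mult2_eq)
  have top: "?top \<and> ?low \<longleftrightarrow> (\<exists>k\<le>m. fst u div b ^ k = fst v div b ^ k \<and>
                                  snd u div b ^ (Suc m - k) = snd v div b ^ (Suc m - k))"
  proof -
    have "?top \<and> fst u mod b ^ m div b ^ k = fst v mod b ^ m div b ^ k \<and>
            snd u div b div b ^ (m - k) = snd v div b div b ^ (m - k) \<longleftrightarrow>
          fst u div b ^ k = fst v div b ^ k \<and> snd u div b ^ (Suc m - k) = snd v div b ^ (Suc m - k)"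
      if "k \<le> m" for k
      by (simp only: div_pow_eq_iff[OF assms(1) that, of "fst u"] row[OF that] conj_assoc)
    then show ?thesis
      unfolding clash_def lower_cell_def fst_conv snd_conv by blast
  qed
  have last: "fst u div b ^ Suc m = fst v div b ^ Suc m"
    using assms by simp
  have "?lhs \<longleftrightarrow> snd u = snd v \<or> (\<exists>k\<le>m. fst u div b ^ k = fst v div b ^ k \<and>
                                  snd u div b ^ (Suc m - k) = snd v div b ^ (Suc m - k))"
  proof
    assume ?lhs
    then obtain k where "k \<le> Suc m" "fst u div b ^ k = fst v div b ^ k"
        "snd u div b ^ (Suc m - k) = snd v div b ^ (Suc m - k)"
      unfolding clash_def by blast
    then show "snd u = snd v \<or> (\<exists>k\<le>m. fst u div b ^ k = fst v div b ^ k \<and>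
                                  snd u div b ^ (Suc m - k) = snd v div b ^ (Suc m - k))"
      by (cases "k = Suc m") auto
  next
    show ?lhs if "snd u = snd v \<or> (\<exists>k\<le>m. fst u div b ^ k = fst v div b ^ k \<and>
                                  snd u div b ^ (Suc m - k) = snd v div b ^ (Suc m - k))"
      using that last unfolding clash_def by (auto intro: le_SucI)
  qed
  with top show ?thesis
    by (simp only:)
qed

lemma lower_cell_mem_grid:
  assumes "b > 0" "u \<in> {..<b ^ Suc m} \<times> {..<b ^ Suc m}"
  shows "lower_cell b m u \<in> {..<b ^ m} \<times> {..<b ^ m}"
proof -
  have "snd u < b ^ m * b"
    using assms(2) by (simp add: mem_Times_iff mult.commute)
  then show ?thesis
    using assms(1) unfolding lower_cell_def by (simp add: less_mult_imp_div_less)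
qed

lemma pairwise_not_clash_lower_cell:
  assumes "b > 0" "S \<subseteq> {..<b ^ Suc m} \<times> {..<b ^ Suc m}"
    and "pairwise (\<lambda>u v. \<not> clash b (Suc m) u v) S"
  shows "pairwise (\<lambda>r s. \<not> clash b m r s) (lower_cell b m ` {u\<in>S. fst u div b ^ m = c})"
proof (rule pairwiseI)
  fix r s assume "r \<in> lower_cell b m ` {u\<in>S. fst u div b ^ m = c}" "s \<in> lower_cell b m ` {u\<in>S. fst u div b ^ m = c}"
    and "r \<noteq> s"
  then obtain u v where "u \<in> S" "v \<in> S" "fst u div b ^ m = c" "fst v div b ^ m = c"
    and "r = lower_cell b m u" "s = lower_cell b m v" "u \<noteq> v"
    by blast
  moreover have "fst u < b ^ Suc m" "fst v < b ^ Suc m"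
    using \<open>u \<in> S\<close> \<open>v \<in> S\<close> assms(2) by (auto simp: mem_Times_iff)
  ultimately show "\<not> clash b m r s"
    using assms(3) clash_Suc_iff[OF assms(1)] unfolding pairwise_def by metis
qed

lemma leading_digit_add_less:
  fixes c x B b :: nat
  assumes "c < b" "x < B"
  shows "c * B + x < b * B"
proof -
  have "c * B + x < (c + 1) * B"
    using assms(2) by simp
  also have "\<dots> \<le> b * B"
    using assms(1) by (intro mult_le_mono1) simp
  finally show ?thesis .
qed

lemma exists_digit_avoided_in_block:
  fixes f g :: "'a \<Rightarrow> nat"
  assumes "finite S" "inj_on g S" "y \<notin> g ` S" "b > 0"
  shows "\<exists>c<b. \<forall>u\<in>S. g u div b = y div b \<longrightarrow> f u \<noteq> c"
proof -
  define T where "T = {u\<in>S. g u div b = y div b}"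
  have inj: "inj_on (\<lambda>u. g u mod b) T"
  proof (rule inj_onI)
    fix u v assume "u \<in> T" "v \<in> T" "g u mod b = g v mod b"
    then have "g u = g v"
      unfolding T_def by (metis (mono_tags, lifting) div_mult_mod_eq mem_Collect_eq)
    with \<open>u \<in> T\<close> \<open>v \<in> T\<close> assms(2) show "u = v"
      unfolding T_def inj_on_def by blast
  qed
  have sub: "(\<lambda>u. g u mod b) ` T \<subseteq> {..<b} - {y mod b}"
  proof
    fix z assume "z \<in> (\<lambda>u. g u mod b) ` T"
    then obtain u where u: "u \<in> S" "g u div b = y div b" "z = g u mod b"
      unfolding T_def by blast
    have "g u \<noteq> y"
      using u(1) assms(3) by blast
    then have "z \<noteq> y mod b"
      using u(2,3) by (metis div_mult_mod_eq)
    then show "z \<in> {..<b} - {y mod b}"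
      using u(3) assms(4) by simp
  qed
  have "card (f ` T) \<le> card T"
    using assms(1) unfolding T_def by (intro card_image_le) simp
  also have "\<dots> = card ((\<lambda>u. g u mod b) ` T)"
    using inj by (simp add: card_image)
  also have "\<dots> \<le> card ({..<b} - {y mod b})"
    using sub by (intro card_mono) auto
  also have "\<dots> < b"
    using assms(4) by simp
  finally have "\<not> {..<b} \<subseteq> f ` T"
    using assms(1) card_mono[of "f ` T" "{..<b}"] unfolding T_def by auto
  then show ?thesis
    unfolding T_def by blast
qed

lemma exists_free_cell_in_row:
  assumes "b > 0" "S \<subseteq> {..<b ^ m} \<times> {..<b ^ m}" "pairwise (\<lambda>u v. \<not> clash b m u v) S"
    and "y < b ^ m" "y \<notin> snd ` S"
  shows "\<exists>x<b ^ m. \<forall>u\<in>S. \<not> clash b m u (x, y)"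
  using assms(2-)
proof (induction m arbitrary: S y)
  case 0
  then have "S = {}"
    by force
  then show ?case
    by simp
next
  case (Suc m)
  have "finite S"
    using Suc.prems(1) by (rule finite_subset) simp
  then obtain c where "c < b"
    and c: "\<And>u. u \<in> S \<Longrightarrow> snd u div b = y div b \<Longrightarrow> fst u div b ^ m \<noteq> c"
    using exists_digit_avoided_in_block[of S snd y b "\<lambda>u. fst u div b ^ m"] assms(1) Suc.prems
      inj_on_snd_if_pairwise_not_clash by blast
  define R where "R = lower_cell b m ` {u\<in>S. fst u div b ^ m = c}"
  have "R \<subseteq> {..<b ^ m} \<times> {..<b ^ m}"
    using lower_cell_mem_grid[OF assms(1)] Suc.prems(1) unfolding R_def by blast
  moreover have "pairwise (\<lambda>u v. \<not> clash b m u v) R"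
    unfolding R_def using pairwise_not_clash_lower_cell[OF assms(1) Suc.prems(1,2)] .
  moreover have "y div b < b ^ m"
    using Suc.prems(3) by (simp add: less_mult_imp_div_less mult.commute)
  moreover have "y div b \<notin> snd ` R"
    using c unfolding R_def lower_cell_def by force
  ultimately obtain x' where "x' < b ^ m" and x': "\<forall>r\<in>R. \<not> clash b m r (x', y div b)"
    using Suc.IH by blast
  define x where "x = c * b ^ m + x'"
  have "x < b ^ Suc m"
    using leading_digit_add_less[OF \<open>c < b\<close> \<open>x' < b ^ m\<close>] unfolding x_def by simp
  moreover have "\<not> clash b (Suc m) u (x, y)" if "u \<in> S" for u
  proof -
    have "fst u < b ^ Suc m" "snd u \<noteq> y"
      using that Suc.prems(1,4) by (force simp: mem_Times_iff)+
    moreover have "\<not> clash b m (lower_cell b m u) (x', y div b)" if "fst u div b ^ m = c"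
      using x' \<open>u \<in> S\<close> that unfolding R_def by blast
    moreover have "x div b ^ m = c" "lower_cell b m (x, y) = (x', y div b)"
      using \<open>x' < b ^ m\<close> assms(1) unfolding x_def lower_cell_def by simp_all
    ultimately show ?thesis
      using clash_Suc_iff[OF assms(1) \<open>fst u < b ^ Suc m\<close>, of "(x, y)"] \<open>x < b ^ Suc m\<close> by auto
  qed
  ultimately show ?case
    by blast
qed

definition cell_of :: "nat \<Rightarrow> nat \<Rightarrow> real \<times> real \<Rightarrow> nat \<times> nat" where
  "cell_of b m p = (nat \<lfloor>real b ^ m * fst p\<rfloor>, nat \<lfloor>real b ^ m * snd p\<rfloor>)"

lemma mem_elem_int_iff_floor:
  assumes "b > 0"
  shows "p \<in> elem_int b d a \<longleftrightarrow>
           \<lfloor>real b ^ fst d * fst p\<rfloor> = int (fst a) \<and> \<lfloor>real b ^ snd d * snd p\<rfloor> = int (snd a)"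
  using assms by (simp add: elem_int_def floor_eq_iff field_simps)

lemma floor_pow_mult_eq_div:
  assumes "b > 0" "j \<le> m"
  shows "\<lfloor>real b ^ j * t\<rfloor> = \<lfloor>real b ^ m * t\<rfloor> div int (b ^ (m - j))"
proof -
  have "real b ^ m = real b ^ j * real b ^ (m - j)"
    using assms(2) by (simp flip: power_add)
  then have "real b ^ j * t = real b ^ m * t / real_of_int (int (b ^ (m - j)))"
    using assms(1) by simp
  then show ?thesis
    using floor_divide_real_eq_div[of "int (b ^ (m - j))" "real b ^ m * t"] by simp
qed

lemma cell_of_less:
  assumes "b > 0" "p \<in> unit_sq"
  shows "fst (cell_of b m p) < b ^ m" "snd (cell_of b m p) < b ^ m"
proof -
  have "\<lfloor>real b ^ m * fst p\<rfloor> < int (b ^ m)" "\<lfloor>real b ^ m * snd p\<rfloor> < int (b ^ m)"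
    using assms unfolding unit_sq_def by (simp_all add: floor_less_iff)
  moreover have "0 \<le> \<lfloor>real b ^ m * fst p\<rfloor>" "0 \<le> \<lfloor>real b ^ m * snd p\<rfloor>"
    using assms(2) unfolding unit_sq_def by simp_all
  ultimately show "fst (cell_of b m p) < b ^ m" "snd (cell_of b m p) < b ^ m"
    unfolding cell_of_def by (simp_all only: fst_conv snd_conv nat_less_iff)
qed

lemma mem_grid_box_iff:
  assumes "b > 0" "fst u < b ^ m" "snd u < b ^ m"
  shows "p \<in> elem_int b (m, m) u \<longleftrightarrow> p \<in> unit_sq \<and> cell_of b m p = u"
proof
  assume "p \<in> elem_int b (m, m) u"
  then have floors: "\<lfloor>real b ^ m * fst p\<rfloor> = int (fst u)" "\<lfloor>real b ^ m * snd p\<rfloor> = int (snd u)"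
    using mem_elem_int_iff_floor[OF assms(1)] by simp_all
  then have "cell_of b m p = u"
    unfolding cell_of_def by (simp add: prod_eq_iff)
  have "real (fst u) + 1 \<le> real b ^ m" "real (snd u) + 1 \<le> real b ^ m"
    using assms(2,3) by (metis Suc_leI add.commute of_nat_Suc of_nat_le_iff of_nat_power)+
  with floors have "0 \<le> real b ^ m * fst p" "real b ^ m * fst p < real b ^ m * 1"
    "0 \<le> real b ^ m * snd p" "real b ^ m * snd p < real b ^ m * 1"
    by (simp_all add: floor_eq_iff)
  moreover have "0 < real b ^ m"
    using assms(1) by simp
  ultimately have "p \<in> unit_sq"
    unfolding unit_sq_def by (simp add: zero_le_mult_iff mult_less_cancel_left_pos)
  with \<open>cell_of b m p = u\<close> show "p \<in> unit_sq \<and> cell_of b m p = u" by blast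
next
  assume "p \<in> unit_sq \<and> cell_of b m p = u"
  then show "p \<in> elem_int b (m, m) u"
    using mem_elem_int_iff_floor[OF assms(1)]
    unfolding cell_of_def unit_sq_def by auto
qed

lemma grid_box_corner:
  assumes "b > 0"
  shows "(real (fst u) / real b ^ m, real (snd u) / real b ^ m) \<in> elem_int b (m, m) u"
  using assms by (simp add: mem_elem_int_iff_floor)

lemma mem_elem_int_iff_cell_div:
  assumes "b > 0" "k \<le> m" "p \<in> unit_sq"
  shows "p \<in> elem_int b (m - k, k) a \<longleftrightarrow>
           fst (cell_of b m p) div b ^ k = fst a \<and> snd (cell_of b m p) div b ^ (m - k) = snd a"
proof -
  have "\<lfloor>real b ^ m * fst p\<rfloor> = int (fst (cell_of b m p))"
       "\<lfloor>real b ^ m * snd p\<rfloor> = int (snd (cell_of b m p))"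
    using assms(3) unfolding cell_of_def unit_sq_def by auto
  then show ?thesis
    using floor_pow_mult_eq_div[OF assms(1), of "m - k" m] floor_pow_mult_eq_div[OF assms(1), of k m] assms(2)
    by (simp add: mem_elem_int_iff_floor[OF assms(1)] del: of_nat_power flip: zdiv_int)
qed

lemma Em_grid_box:
  assumes "b \<ge> 2" "fst u < b ^ m" "snd u < b ^ m"
  shows "Em b m (elem_int b (m, m) u) =
           (\<lambda>k. elem_int b (m - k, k) (fst u div b ^ k, snd u div b ^ (m - k))) ` {..m}"
proof (intro equalityI subsetI)
  have "b > 0"
    using assms(1) by simp
  have mem_box: "p \<in> elem_int b (m, m) u \<longleftrightarrow> p \<in> unit_sq \<and> cell_of b m p = u" for p
    using mem_grid_box_iff[OF \<open>b > 0\<close> assms(2,3)] .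
  fix E assume "E \<in> Em b m (elem_int b (m, m) u)"
  then obtain d a where E: "E = elem_int b d a" and "elem_vol b d = 1 / real b ^ m"
    and "elem_int b (m, m) u \<subseteq> E"
    unfolding Em_def by blast
  then have "real b ^ (fst d + snd d) = real b ^ m"
    using \<open>b > 0\<close> unfolding elem_vol_def by (simp add: field_simps)
  then have "fst d + snd d = m"
    using assms(1) by (simp add: power_inject_exp)
  then obtain k where d: "d = (m - k, k)" and "k \<le> m"
    by (metis add_diff_cancel_right' le_add2 prod.collapse)
  define c where "c = (real (fst u) / real b ^ m, real (snd u) / real b ^ m)"
  have "c \<in> unit_sq" "cell_of b m c = u" "c \<in> E"
    using grid_box_corner[OF \<open>b > 0\<close>] mem_box \<open>_ \<subseteq> E\<close> unfolding c_def by blast+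
  then have "a = (fst u div b ^ k, snd u div b ^ (m - k))"
    using mem_elem_int_iff_cell_div[OF \<open>b > 0\<close> \<open>k \<le> m\<close> \<open>c \<in> unit_sq\<close>] E d by (simp add: prod_eq_iff)
  then show "E \<in> (\<lambda>k. elem_int b (m - k, k) (fst u div b ^ k, snd u div b ^ (m - k))) ` {..m}"
    using \<open>k \<le> m\<close> unfolding E d by blast
next
  have "b > 0"
    using assms(1) by simp
  fix E assume "E \<in> (\<lambda>k. elem_int b (m - k, k) (fst u div b ^ k, snd u div b ^ (m - k))) ` {..m}"
  then obtain k where "k \<le> m" and E: "E = elem_int b (m - k, k) (fst u div b ^ k, snd u div b ^ (m - k))"
    by blast
  have "b ^ m = b ^ (m - k) * b ^ k"
    using \<open>k \<le> m\<close> by (simp flip: power_add)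
  then have "fst u div b ^ k < b ^ (m - k)" "snd u div b ^ (m - k) < b ^ k"
    using assms(2,3) by (simp_all add: less_mult_imp_div_less mult.commute)
  moreover have "elem_vol b (m - k, k) = 1 / real b ^ m"
    using \<open>k \<le> m\<close> unfolding elem_vol_def by simp
  moreover have "elem_int b (m, m) u \<subseteq> E"
    using mem_grid_box_iff[OF \<open>b > 0\<close> assms(2,3)] mem_elem_int_iff_cell_div[OF \<open>b > 0\<close> \<open>k \<le> m\<close>]
    unfolding E by auto
  ultimately show "E \<in> Em b m (elem_int b (m, m) u)"
    unfolding Em_def E
    by (intro CollectI exI[of _ "(m - k, k)"] exI[of _ "(fst u div b ^ k, snd u div b ^ (m - k))"]) simp
qed

lemma mem_Union_Em_grid_box_iff_clash:
  assumes "b \<ge> 2" "fst u < b ^ m" "snd u < b ^ m" "p \<in> unit_sq"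
  shows "p \<in> \<Union> (Em b m (elem_int b (m, m) u)) \<longleftrightarrow> clash b m u (cell_of b m p)"
proof -
  have "b > 0"
    using assms(1) by simp
  then show ?thesis
    unfolding Em_grid_box[OF assms(1-3)] clash_def
    using mem_elem_int_iff_cell_div[OF \<open>b > 0\<close> _ assms(4)]
    by (auto simp: eq_commute[of "fst u div _"] eq_commute[of "snd u div _"])
qed


lemma foldl_Diff_eq: "foldl (\<lambda>U X. U - g X) A xs = A - (\<Union>X\<in>set xs. g X)"
  by (induction xs arbitrary: A) auto

lemma U_after_eq: "U_after b m xs = unit_sq - (\<Union>X\<in>set xs. \<Union> (Em b m X))"
  unfolding U_after_def U_step_def by (rule foldl_Diff_eq)

lemma mem_U_after_grid_boxes_iff:
  assumes "b \<ge> 2" "set us \<subseteq> {..<b ^ m} \<times> {..<b ^ m}" "p \<in> unit_sq"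
  shows "p \<in> U_after b m (map (elem_int b (m, m)) us) \<longleftrightarrow> (\<forall>u\<in>set us. \<not> clash b m u (cell_of b m p))"
proof -
  have "p \<in> U_after b m (map (elem_int b (m, m)) us) \<longleftrightarrow>
          (\<forall>u\<in>set us. p \<notin> \<Union> (Em b m (elem_int b (m, m) u)))"
    using assms(3) unfolding U_after_eq by simp
  also have "\<dots> \<longleftrightarrow> (\<forall>u\<in>set us. \<not> clash b m u (cell_of b m p))"
  proof (rule ball_cong[OF refl])
    fix u assume "u \<in> set us"
    then have "fst u < b ^ m" "snd u < b ^ m"
      using assms(2) by (auto simp: mem_Times_iff)
    from mem_Union_Em_grid_box_iff_clash[OF assms(1) this assms(3)]
    show "p \<notin> \<Union> (Em b m (elem_int b (m, m) u)) \<longleftrightarrow> \<not> clash b m u (cell_of b m p)"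
      by simp
  qed
  finally show ?thesis .
qed

lemma grid_boxes_eq_image: "grid_boxes b m = elem_int b (m, m) ` ({..<b ^ m} \<times> {..<b ^ m})"
  unfolding grid_boxes_def by (auto simp: image_def mem_Times_iff)

lemma sorted_wrt_irrefl_sym:
  assumes "sorted_wrt R xs" "\<And>x. \<not> R x x" "\<And>x y. R x y \<Longrightarrow> R y x"
  shows "distinct xs \<and> pairwise R (set xs)"
  using assms(1)
proof (induction xs)
  case Nil
  then show ?case by simp
next
  case (Cons x xs)
  then show ?case
    using assms(2,3) by (auto simp: pairwise_insert)
qed

lemma valid_run_grid_cells:
  assumes "b \<ge> 2" "valid_run b m xs"
  obtains us where "xs = map (elem_int b (m, m)) us" "set us \<subseteq> {..<b ^ m} \<times> {..<b ^ m}"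
    and "distinct us" "pairwise (\<lambda>u v. \<not> clash b m u v) (set us)"
proof -
  have "b > 0"
    using assms(1) by simp
  have run: "xs ! j \<in> grid_boxes b m" "xs ! j \<subseteq> U_after b m (take j xs)" if "j < length xs" for j
    using assms(2) that unfolding valid_run_def by blast+
  have "xs \<in> lists (elem_int b (m, m) ` ({..<b ^ m} \<times> {..<b ^ m}))"
  proof (intro in_listsI ballI)
    fix X assume "X \<in> set xs"
    then obtain j where "j < length xs" "X = xs ! j"
      by (auto simp: in_set_conv_nth)
    then show "X \<in> elem_int b (m, m) ` ({..<b ^ m} \<times> {..<b ^ m})"
      using run(1) grid_boxes_eq_image by simp
  qed
  then obtain us where xs: "xs = map (elem_int b (m, m)) us" and us: "set us \<subseteq> {..<b ^ m} \<times> {..<b ^ m}"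
    unfolding lists_image by blast
  have "\<not> clash b m (us ! i) (us ! j)" if "i < j" "j < length us" for i j
  proof -
    define c where "c = (real (fst (us ! j)) / real b ^ m, real (snd (us ! j)) / real b ^ m)"
    have "us ! j \<in> set us"
      using that(2) by simp
    then have "fst (us ! j) < b ^ m" "snd (us ! j) < b ^ m"
      using us by (auto simp: mem_Times_iff)
    moreover have c: "c \<in> elem_int b (m, m) (us ! j)"
      unfolding c_def by (rule grid_box_corner[OF \<open>b > 0\<close>])
    ultimately have "c \<in> unit_sq" "cell_of b m c = us ! j"
      using mem_grid_box_iff[OF \<open>b > 0\<close>] by blast+
    have "c \<in> U_after b m (map (elem_int b (m, m)) (take j us))"
      using run(2)[of j] that(2) c unfolding xs by (auto simp: take_map)
    moreover have "set (take j us) \<subseteq> {..<b ^ m} \<times> {..<b ^ m}"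
      using set_take_subset us by (rule order.trans)
    ultimately have "\<forall>u\<in>set (take j us). \<not> clash b m u (us ! j)"
      using mem_U_after_grid_boxes_iff[OF assms(1)] \<open>c \<in> unit_sq\<close> \<open>cell_of b m c = us ! j\<close> by simp
    moreover have "take j us ! i = us ! i" "i < length (take j us)"
      using that by simp_all
    then have "us ! i \<in> set (take j us)"
      by (metis nth_mem)
    ultimately show ?thesis
      by blast
  qed
  then have "sorted_wrt (\<lambda>u v. \<not> clash b m u v) us"
    by (simp add: sorted_wrt_iff_nth_less)
  then have "distinct us \<and> pairwise (\<lambda>u v. \<not> clash b m u v) (set us)"
    by (rule sorted_wrt_irrefl_sym) (use clash_refl clash_sym in blast)+
  with xs us show ?thesis
    using that by blast
qed

lemma U_after_grid_boxes_empty_if_all_rows: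
  assumes "b \<ge> 2" "set us \<subseteq> {..<b ^ m} \<times> {..<b ^ m}" "{..<b ^ m} \<subseteq> snd ` set us"
  shows "U_after b m (map (elem_int b (m, m)) us) = {}"
proof (rule equals0I)
  fix p assume p: "p \<in> U_after b m (map (elem_int b (m, m)) us)"
  then have "p \<in> unit_sq"
    unfolding U_after_eq by blast
  then have cell: "fst (cell_of b m p) < b ^ m" "snd (cell_of b m p) < b ^ m"
    using cell_of_less assms(1) by simp_all
  then have "snd (cell_of b m p) \<in> snd ` set us"
    using assms(3) by auto
  then obtain u where "u \<in> set us" "snd u = snd (cell_of b m p)"
    by auto
  moreover from this have "fst u < b ^ m"
    using assms(2) by (auto simp: mem_Times_iff)
  ultimately have "clash b m u (cell_of b m p)"
    using cell by (simp add: clash_same_row)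
  with p \<open>u \<in> set us\<close> show False
    using mem_U_after_grid_boxes_iff[OF assms(1,2) \<open>p \<in> unit_sq\<close>] by auto
qed

lemma exists_grid_box_subset_U_after:
  assumes "b \<ge> 2" "set us \<subseteq> {..<b ^ m} \<times> {..<b ^ m}" "pairwise (\<lambda>u v. \<not> clash b m u v) (set us)"
    and "y < b ^ m" "y \<notin> snd ` set us"
  shows "\<exists>X\<in>grid_boxes b m. X \<noteq> {} \<and> X \<subseteq> U_after b m (map (elem_int b (m, m)) us)"
proof -
  have "b > 0"
    using assms(1) by simp
  obtain x where "x < b ^ m" and free: "\<forall>u\<in>set us. \<not> clash b m u (x, y)"
    using exists_free_cell_in_row[OF \<open>b > 0\<close> assms(2-5)] by blast
  then have xy: "fst (x, y) < b ^ m" "snd (x, y) < b ^ m"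
    using assms(4) by simp_all
  define X where "X = elem_int b (m, m) (x, y)"
  have "X \<in> grid_boxes b m"
    unfolding X_def grid_boxes_eq_image using xy by (simp add: mem_Times_iff)
  moreover have "X \<noteq> {}"
    using grid_box_corner[OF \<open>b > 0\<close>, of "(x, y)" m] unfolding X_def by auto
  moreover have "X \<subseteq> U_after b m (map (elem_int b (m, m)) us)"
  proof
    fix q assume "q \<in> X"
    then have "q \<in> unit_sq" "cell_of b m q = (x, y)"
      using mem_grid_box_iff[OF \<open>b > 0\<close> xy] unfolding X_def by simp_all
    then show "q \<in> U_after b m (map (elem_int b (m, m)) us)"
      using mem_U_after_grid_boxes_iff[OF assms(1,2)] free by simp
  qed
  ultimately show ?thesis
    by blast
qed

theorem mainTheorem5:
  fixes b m :: nat and xs :: "(real \<times> real) set list"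
  assumes "b \<ge> 2"
    and "valid_run b m xs"
  shows "length xs \<le> b ^ m
     \<and> (U_after b m xs = {} \<longleftrightarrow> length xs = b ^ m)
     \<and> (U_after b m xs \<noteq> {} \<longrightarrow> (\<exists>X \<in> grid_boxes b m. X \<subseteq> U_after b m xs))"
proof -
  obtain us where xs: "xs = map (elem_int b (m, m)) us" and us: "set us \<subseteq> {..<b ^ m} \<times> {..<b ^ m}"
    and "distinct us" and pw: "pairwise (\<lambda>u v. \<not> clash b m u v) (set us)"
    using valid_run_grid_cells[OF assms] .
  then have card_rows: "card (snd ` set us) = length xs"
    using inj_on_snd_if_pairwise_not_clash[OF us] by (simp add: xs card_image distinct_card)
  have rows: "snd ` set us \<subseteq> {..<b ^ m}"
    using us by auto
  then have le: "length xs \<le> b ^ m"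
    using card_mono[OF finite_lessThan rows] card_rows by simp
  show ?thesis
  proof (cases "length xs = b ^ m")
    case True
    then have "snd ` set us = {..<b ^ m}"
      using card_subset_eq[OF finite_lessThan rows] card_rows by simp
    then have "U_after b m xs = {}"
      using U_after_grid_boxes_empty_if_all_rows[OF assms(1) us] unfolding xs by simp
    with True show ?thesis
      by simp
  next
    case False
    then have "\<not> {..<b ^ m} \<subseteq> snd ` set us"
      using card_mono[of "snd ` set us" "{..<b ^ m}"] card_rows le by auto
    then obtain y where "y < b ^ m" "y \<notin> snd ` set us"
      by auto
    with False le show ?thesis
      using exists_grid_box_subset_U_after[OF assms(1) us pw] unfolding xs by auto
  qed
qed

end
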